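(* Let $\Omega\subset\mathbb{R}^d$ be a bounded domain with the interior cone property described in the context (with cone $V$ and constants $\mu>0$, $\nu<1$), let $\alpha\in(0,1)$ and $J\in C^\alpha(\Omega)$. Let $q\ge d/\alpha$, $M>0$, $C>0$, define $$\kappa(t):=d\,\frac{|V|}{\mu^d}\int_0^\mu\big(t+M r^\alpha\big)^{-q}r^{d-1}\,dr,\quad t>0,\qquad \delta:=\kappa^{-1}(C),$$ and suppose that $$\int_\Omega\max\{\delta,J(x)\}^{-q}\,dx\le C\quad\text{and}\quad\sup_{x_1,x_2\in\Omega,\ |x_1-x_2|<\mu}\frac{|J(x_1)-J(x_2)|}{|x_1-x_2|^\alpha}\le M.$$ Then $J(x)>\delta>0$ for all $x\in\Omega$.
   Context: Interior cone property: with $V:=B_\mu(0)\cap\{z=(z_1,\dots,z_d)\in\mathbb{R}^d: z_1>\nu|z|\}$ for fixed constants $\mu>0$, $\nu<1$, for each $x\in\Omega$ there is a rotation $Q_x\in SO(d)$ with $x+Q_xV\subset\Omega$. $|V|$ is the Lebesgue measure of $V$. *)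

theory Defs
  imports "HOL-Analysis.Analysis"
begin

definition holder_continuous_on :: "real \<Rightarrow> ('a::metric_space) set \<Rightarrow> ('a \<Rightarrow> real) \<Rightarrow> bool" where
  "holder_continuous_on \<alpha> S f \<longleftrightarrow>
     (\<exists>K. \<forall>x\<in>S. \<forall>y\<in>S. \<bar>f x - f y\<bar> \<le> K * dist x y powr \<alpha>)"

text \<open>The cone V = B_mu(0) intersected with {z. z_1 > nu |z|}; the distinguished
  "first" coordinate is the index i0.\<close>
definition cone_V :: "'n::finite \<Rightarrow> real \<Rightarrow> real \<Rightarrow> (real ^ 'n) set" where
  "cone_V i0 \<mu> \<nu> = ball 0 \<mu> \<inter> {z. z $ i0 > \<nu> * norm z}"

definition rotation_matrix :: "real ^ 'n ^ 'n \<Rightarrow> bool" where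
  "rotation_matrix Q \<longleftrightarrow> orthogonal_matrix Q \<and> det Q = 1"

definition interior_cone_property :: "(real ^ 'n) set \<Rightarrow> 'n \<Rightarrow> real \<Rightarrow> real \<Rightarrow> bool" where
  "interior_cone_property \<Omega> i0 \<mu> \<nu> \<longleftrightarrow>
     (\<forall>x\<in>\<Omega>. \<exists>Q. rotation_matrix Q \<and> (\<lambda>v. x + Q *v v) ` cone_V i0 \<mu> \<nu> \<subseteq> \<Omega>)"

definition kappa :: "nat \<Rightarrow> real \<Rightarrow> real \<Rightarrow> real \<Rightarrow> real \<Rightarrow> real \<Rightarrow> real \<Rightarrow> real" where
  "kappa d volV \<mu> M \<alpha> q t =
     real d * volV / \<mu> ^ d *
       integral {0..\<mu>} (\<lambda>r. (t + M * r powr \<alpha>) powr (-q) * r ^ (d - 1))"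

end

theory Submission
  imports Defs
begin

(* If J x <= delta at some x in Omega, the Hoelder bound gives max delta (J y) <= delta + M |y - x|^alpha
   on the cone x + Q V inside Omega, and integrating over that cone in polar coordinates gives exactly
   kappa(delta) = C.  The interior cone property at a point on the axis of that cone yields a ball in
   Omega disjoint from the cone, so the integral over Omega exceeds C: a contradiction.  The number
   delta is well defined because kappa is continuous and strictly decreasing on (0, oo), small for
   large t, and unbounded as t -> 0 since alpha q >= d. *)

text \<open>The library proves rotation invariance (\<open>measure_orthogonal_image\<close>) only for index types
  of class \<open>wellorder\<close>.  Here it follows from a Vitali covering by balls, which an orthogonal map
  sends to disjoint balls of the same radii.\<close>

lemma emeasure_orthogonal_image_open:
  fixes T :: "'a::euclidean_space \<Rightarrow> 'a"
  assumes T: "orthogonal_transformation T" and S: "open S"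
  shows "emeasure lebesgue (T ` S) = emeasure lebesgue S"
proof -
  define K where "K = {(c, r). 0 < r \<and> ball c r \<subseteq> S}"
  have "\<exists>i. i \<in> K \<and> x \<in> ball (fst i) (snd i) \<and> snd i < d" if "x \<in> S" "0 < d" for x d
  proof -
    obtain r where "0 < r" "ball x r \<subseteq> S"
      using S \<open>x \<in> S\<close> openE by blast
    then show ?thesis
      using \<open>0 < d\<close> by (intro exI[of _ "(x, min r (d / 2))"]) (auto simp: K_def)
  qed
  then obtain C where C: "countable C" "C \<subseteq> K"
    and disj: "pairwise (\<lambda>i j. disjnt (ball (fst i) (snd i)) (ball (fst j) (snd j))) C"
    and null: "negligible (S - (\<Union>i\<in>C. ball (fst i) (snd i)))"
    by (rule Vitali_covering_theorem_balls[of S K fst snd]) blast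
  define B :: "'a \<times> real \<Rightarrow> 'a set" where "B = (\<lambda>i. ball (fst i) (snd i))"
  define N where "N = S - \<Union>(B ` C)"
  have "\<Union>(B ` C) \<subseteq> S"
    using C(2) by (force simp: B_def K_def)
  then have S_eq: "S = \<Union>(B ` C) \<union> N"
    by (auto simp: N_def)
  have "negligible (T ` N)"
    using null T by (intro negligible_differentiable_image_negligible linear_imp_differentiable_on)
      (auto simp: N_def B_def orthogonal_transformation_linear)
  have TB: "T ` B i = (+) (T (fst i) - fst i) ` B i" for i
    using T by (simp add: B_def image_orthogonal_transformation_ball translation_diff)
  have "emeasure lebesgue (T ` B i) = emeasure lebesgue (B i)" for i
    using emeasure_lebesgue_affine[of 1 "T (fst i) - fst i" "B i"] by (simp add: TB add.commute)
  moreover have "disjoint_family_on B C" "disjoint_family_on (\<lambda>i. T ` B i) C"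
    using disj orthogonal_transformation_inj[OF T]
    by (auto simp: disjoint_family_on_def pairwise_def disjnt_def B_def image_Int[symmetric])
  ultimately have "emeasure lebesgue (T ` (\<Union>(B ` C))) = emeasure lebesgue (\<Union>(B ` C))"
    using C(1) T by (simp add: emeasure_UN_countable B_def image_orthogonal_transformation_ball image_UN)
  moreover have "open (\<Union>(B ` C))" "open (T ` (\<Union>(B ` C)))"
    using T by (auto simp: B_def image_orthogonal_transformation_ball image_UN)
  moreover have "N \<in> null_sets lebesgue" "T ` N \<in> null_sets lebesgue"
    using null \<open>negligible (T ` N)\<close> by (auto simp: negligible_iff_null_sets N_def B_def)
  ultimately show ?thesis
    using S_eq by (metis image_Un emeasure_Un_null_set borel_open sets_completionI_sets sets_lborel)
qed

definition cone_at :: "'a::real_inner \<Rightarrow> 'a \<Rightarrow> real \<Rightarrow> real \<Rightarrow> 'a set" where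
  "cone_at x e r \<nu> = {y. norm (y - x) < r \<and> \<nu> * norm (y - x) < (y - x) \<bullet> e}"

lemma cone_V_eq_cone_at: "cone_V i0 r \<nu> = cone_at 0 (axis i0 1) r \<nu>"
  by (auto simp: cone_V_def cone_at_def inner_axis)

lemma open_cone_at: "open (cone_at x e r \<nu>)"
  unfolding cone_at_def by (intro open_Collect_conj open_Collect_less continuous_intros)

lemma cone_at_subset_ball: "cone_at x e r \<nu> \<subseteq> ball x r"
  by (auto simp: cone_at_def dist_norm norm_minus_commute)

lemma lmeasurable_cone_at: "cone_at x e r \<nu> \<in> lmeasurable"
  by (meson bounded_ball bounded_subset cone_at_subset_ball lmeasurable_open open_cone_at)

lemma cone_at_Int_ball: "r \<le> \<mu> \<Longrightarrow> cone_at x e \<mu> \<nu> \<inter> ball x r = cone_at x e r \<nu>"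
  by (auto simp: cone_at_def dist_norm norm_minus_commute)

lemma cone_at_translation: "cone_at x e r \<nu> = (+) x ` cone_at 0 e r \<nu>"
  by (force simp: cone_at_def image_iff intro: exI[of _ "_ - x"])

lemma cone_at_scaling:
  assumes "0 < c"
  shows "cone_at 0 e (c * r) \<nu> = (*\<^sub>R) c ` cone_at 0 e r \<nu>"
proof -
  have "y \<in> cone_at 0 e (c * r) \<nu> \<longleftrightarrow> y /\<^sub>R c \<in> cone_at 0 e r \<nu>" for y
    using assms by (simp add: cone_at_def field_simps mult.left_commute)
  then show ?thesis
    using assms by (force simp: image_iff intro: exI[of _ "_ /\<^sub>R c"])
qed

lemma measure_cone_at_radius:
  fixes x e :: "'a::euclidean_space"
  assumes "0 \<le> r" "0 < \<mu>"
  shows "measure lebesgue (cone_at x e r \<nu>) = (r / \<mu>) ^ DIM('a) * measure lebesgue (cone_at x e \<mu> \<nu>)"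
proof (cases "r = 0")
  case True
  then show ?thesis by (simp add: cone_at_def)
next
  case False
  then have "cone_at 0 e r \<nu> = (\<lambda>y. (r / \<mu>) *\<^sub>R y + 0) ` cone_at 0 e \<mu> \<nu>"
    using assms cone_at_scaling[of "r / \<mu>" e \<mu> \<nu>] by simp
  then show ?thesis
    using assms measure_lebesgue_affine[of "r / \<mu>" 0 "cone_at 0 e \<mu> \<nu>"]
    by (simp add: cone_at_translation[of x] measure_translation)
qed

lemma orthogonal_transformation_image_cone_at:
  fixes T :: "'a::euclidean_space \<Rightarrow> 'a"
  assumes T: "orthogonal_transformation T"
  shows "(\<lambda>v. x + T v) ` cone_at 0 e r \<nu> = cone_at x (T e) r \<nu>"
proof (intro set_eqI iffI)
  have inner: "T v \<bullet> T w = v \<bullet> w" for v w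
    using T by (simp add: orthogonal_transformation_def)
  have mem: "x + T v \<in> cone_at x (T e) r \<nu> \<longleftrightarrow> v \<in> cone_at 0 e r \<nu>" for v
    using T by (simp add: cone_at_def orthogonal_transformation_norm inner)
  fix y
  show "y \<in> cone_at x (T e) r \<nu>" if "y \<in> (\<lambda>v. x + T v) ` cone_at 0 e r \<nu>"
    using that mem by auto
  obtain v where "y - x = T v"
    using orthogonal_transformation_surj[OF T] by (rule surjE)
  then have "y = x + T v"
    by (simp add: algebra_simps)
  then show "y \<in> (\<lambda>v. x + T v) ` cone_at 0 e r \<nu>" if "y \<in> cone_at x (T e) r \<nu>"
    using that mem[of v] by blast
qed

lemma measure_cone_at_orthogonal:
  fixes T :: "'a::euclidean_space \<Rightarrow> 'a"
  assumes T: "orthogonal_transformation T"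
  shows "measure lebesgue (cone_at x (T e) r \<nu>) = measure lebesgue (cone_at 0 e r \<nu>)"
proof -
  have "measure lebesgue (cone_at x (T e) r \<nu>) = measure lebesgue ((+) x ` T ` cone_at 0 e r \<nu>)"
    using orthogonal_transformation_image_cone_at[OF T, of x e r \<nu>] by (simp add: image_image)
  also have "\<dots> = measure lebesgue (T ` cone_at 0 e r \<nu>)"
    by (rule measure_translation)
  also have "\<dots> = measure lebesgue (cone_at 0 e r \<nu>)"
    unfolding measure_def by (simp only: emeasure_orthogonal_image_open[OF T open_cone_at])
  finally show ?thesis .
qed

lemma measure_cone_at_pos:
  fixes x e :: "'a::euclidean_space"
  assumes "norm e = 1" "0 < \<mu>" "\<nu> < 1"
  shows "0 < measure lebesgue (cone_at x e \<mu> \<nu>)"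
proof -
  have "x + (\<mu> / 2) *\<^sub>R e \<in> cone_at x e \<mu> \<nu>"
    using assms by (simp add: cone_at_def inner_commute power2_norm_eq_inner[symmetric])
  then obtain \<rho> where "0 < \<rho>" "ball (x + (\<mu> / 2) *\<^sub>R e) \<rho> \<subseteq> cone_at x e \<mu> \<nu>"
    by (rule openE[OF open_cone_at])
  then have "measure lebesgue (ball (x + (\<mu> / 2) *\<^sub>R e) \<rho>) \<le> measure lebesgue (cone_at x e \<mu> \<nu>)"
    by (intro measure_mono_fmeasurable lmeasurable_cone_at) auto
  then show ?thesis
    using content_ball_pos[OF \<open>0 < \<rho>\<close>, of "x + (\<mu> / 2) *\<^sub>R e"] by (simp, linarith)
qed

lemma det_one_dim1_fixes_axis:
  fixes R :: "real^'n^'n"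
  assumes "CARD('n) = 1" "det R = 1"
  shows "R *v axis i 1 = axis i 1"
proof -
  have all: "j = i" for j :: 'n
    using assms(1) by (metis UNIV_I card_1_singletonE singletonD)
  then have UNIV_eq: "(UNIV :: 'n set) = {i}"
    by auto
  have "det R = (\<Prod>j\<in>UNIV. R $ j $ j)"
    by (rule det_diagonal) (metis all)
  then have "R $ i $ i = 1"
    using assms(2) by (simp add: UNIV_eq)
  show ?thesis
  proof (subst vec_eq_iff, intro allI)
    fix j :: 'n
    show "(R *v axis i 1) $ j = axis i 1 $ j"
      using all[of j] \<open>R $ i $ i = 1\<close> by (simp add: matrix_vector_mult_def axis_def UNIV_eq)
  qed
qed

lemma orthogonal_transformation_matrix_vector_mult:
  fixes Q :: "real^'n^'n"
  shows "orthogonal_matrix Q \<Longrightarrow> orthogonal_transformation ((*v) Q)"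
  by (simp add: orthogonal_transformation_matrix matrix_vector_mul_linear)

lemma rotated_cone_V_eq_cone_at:
  fixes Q :: "real^'n^'n"
  assumes "orthogonal_matrix Q"
  shows "(\<lambda>v. x + Q *v v) ` cone_V i r \<nu> = cone_at x (Q *v axis i 1) r \<nu>"
  unfolding cone_V_eq_cone_at
  by (rule orthogonal_transformation_image_cone_at[OF orthogonal_transformation_matrix_vector_mult[OF assms]])

lemma measure_rotated_cone_at:
  fixes Q :: "real^'n^'n"
  assumes "orthogonal_matrix Q"
  shows "measure lebesgue (cone_at x (Q *v axis i 1) r \<nu>) = measure lebesgue (cone_V i r \<nu>)"
  unfolding cone_V_eq_cone_at
  by (rule measure_cone_at_orthogonal[OF orthogonal_transformation_matrix_vector_mult[OF assms]])

lemma norm_orthogonal_matrix_axis: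
  fixes Q :: "real^'n^'n"
  shows "orthogonal_matrix Q \<Longrightarrow> norm (Q *v axis i 1) = 1"
  by (simp add: orthogonal_transformation_norm orthogonal_transformation_matrix_vector_mult)

lemma emeasure_cone_at_beyond_radius:
  fixes x e :: "'a::euclidean_space"
  assumes "0 \<le> a" "a \<le> \<mu>" "0 < \<mu>"
  shows "emeasure lebesgue (cone_at x e \<mu> \<nu> \<inter> {y. a < norm (y - x)})
           = ennreal ((1 - (a / \<mu>) ^ DIM('a)) * measure lebesgue (cone_at x e \<mu> \<nu>))"
proof -
  let ?W = "cone_at x e \<mu> \<nu>"
  have Wa: "?W \<inter> cball x a \<in> lmeasurable"
    by (meson fmeasurable_Int_fmeasurable lmeasurable_cone_at lmeasurable_cball fmeasurableD)
  have "cone_at x e a \<nu> - ?W \<inter> cball x a \<union> (?W \<inter> cball x a - cone_at x e a \<nu>) \<subseteq> sphere x a"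
    unfolding cone_at_Int_ball[OF \<open>a \<le> \<mu>\<close>, symmetric] by auto
  then have "measure lebesgue (?W \<inter> cball x a) = measure lebesgue (cone_at x e a \<nu>)"
    by (intro measure_negligible_symdiff lmeasurable_cone_at negligible_subset[OF negligible_sphere])
  also have "\<dots> = (a / \<mu>) ^ DIM('a) * measure lebesgue ?W"
    using assms(1,3) by (rule measure_cone_at_radius)
  finally have inner: "measure lebesgue (?W \<inter> cball x a) = (a / \<mu>) ^ DIM('a) * measure lebesgue ?W" .
  have "?W \<inter> {y. a < norm (y - x)} = ?W - ?W \<inter> cball x a"
    by (auto simp: dist_norm[symmetric] dist_commute)
  moreover have "measure lebesgue (?W - ?W \<inter> cball x a) = measure lebesgue ?W - measure lebesgue (?W \<inter> cball x a)"
    using lmeasurable_cone_at fmeasurableD[OF Wa] by (rule measurable_measure_Diff) auto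
  moreover have "?W - ?W \<inter> cball x a \<in> lmeasurable"
    using lmeasurable_cone_at fmeasurableD[OF Wa] by (rule fmeasurable_Diff)
  ultimately show ?thesis
    using inner by (simp add: emeasure_eq_measure2 left_diff_distrib)
qed

lemma has_integral_power_Ioo:
  assumes "0 < n" "a \<le> b"
  shows "((\<lambda>r. r ^ (n - 1)) has_integral (b ^ n - a ^ n) / n) {a<..<b}"
proof -
  have "((\<lambda>r. r ^ (n - 1)) has_integral (b ^ n / n - a ^ n / n)) {a..b}"
  proof (rule fundamental_theorem_of_calculus[OF \<open>a \<le> b\<close>])
    fix r
    have "((\<lambda>r. r ^ n / n) has_real_derivative r ^ (n - 1)) (at r within {a..b})"
      using assms by (auto intro!: derivative_eq_intros)
    then show "((\<lambda>r. r ^ n / n) has_vector_derivative r ^ (n - 1)) (at r within {a..b})"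
      by (simp add: has_real_derivative_iff_has_vector_derivative)
  qed
  then show ?thesis
    by (simp add: has_integral_open_interval[of _ _ a b, unfolded box_real cbox_interval] diff_divide_distrib)
qed

lemma nn_integral_power_Ioo:
  assumes "0 < n" "0 \<le> c" "0 \<le> a" "a \<le> b"
  shows "(\<integral>\<^sup>+r\<in>{a<..<b}. ennreal (c * r ^ (n - 1)) \<partial>lborel) = ennreal (c * ((b ^ n - a ^ n) / n))"
  using assms has_integral_power_Ioo[of n a b]
  by (intro nn_integral_has_integral_lebesgue' has_integral_mult_right) auto

text \<open>Polar coordinates on a cone: the points of the cone within distance \<open>r\<close> of its vertex form
  the cone of radius \<open>r\<close>, of measure \<open>(r / \<mu>)\<^sup>d m\<close>, so the distance to the vertex has density
  \<open>d m r\<^sup>d\<^sup>-\<^sup>1 / \<mu>\<^sup>d\<close> on \<open>(0, \<mu>)\<close>.\<close>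

lemma distr_norm_cone_at:
  fixes x e :: "'a::euclidean_space" and \<mu> \<nu> :: real
  defines "d \<equiv> DIM('a)" and "m \<equiv> measure lebesgue (cone_at x e \<mu> \<nu>)"
  assumes "0 < \<mu>"
  shows "distr (density lebesgue (indicator (cone_at x e \<mu> \<nu>))) borel (\<lambda>y. norm (y - x))
           = density lborel (\<lambda>r. indicator {0<..<\<mu>} r * ennreal (d * m / \<mu> ^ d * r ^ (d - 1)))"
    (is "?N = ?D")
proof (rule measure_eqI_lessThan)
  let ?W = "cone_at x e \<mu> \<nu>"
  have norm_meas [measurable]: "(\<lambda>y. norm (y - x)) \<in> borel_measurable lebesgue"
    by (rule measurable_completion) measurable
  have W_sets: "?W \<inter> {y. c < norm (y - x)} \<in> sets lebesgue" for c
    using fmeasurableD[OF lmeasurable_cone_at] by measurable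
  have d: "0 < d"
    by (simp add: d_def)
  have both: "emeasure ?N {a<..} = ennreal ((1 - (b / \<mu>) ^ d) * m)
     \<and> emeasure ?D {a<..} = ennreal ((1 - (b / \<mu>) ^ d) * m)" if b: "b = max 0 (min a \<mu>)" for a b
  proof
    have b_bounds: "0 \<le> b" "b \<le> \<mu>"
      using b \<open>0 < \<mu>\<close> by auto
    have "?W \<inter> {y. a < norm (y - x)} = ?W \<inter> {y. b < norm (y - x)}"
      using b by (auto simp: cone_at_def)
    then have "emeasure ?N {a<..} = emeasure lebesgue (?W \<inter> {y. b < norm (y - x)})"
      using norm_meas lmeasurable_cone_at[of x e \<mu> \<nu>] W_sets[of b]
      by (simp add: emeasure_distr emeasure_density indicator_inter_arith[symmetric] fmeasurableD
          nn_integral_indicator Int_commute vimage_def)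
    also have "\<dots> = ennreal ((1 - (b / \<mu>) ^ d) * m)"
      unfolding d_def m_def by (rule emeasure_cone_at_beyond_radius[OF b_bounds \<open>0 < \<mu>\<close>])
    finally show "emeasure ?N {a<..} = ennreal ((1 - (b / \<mu>) ^ d) * m)" .
    have "emeasure ?D {a<..} = (\<integral>\<^sup>+r. ennreal (d * m / \<mu> ^ d * r ^ (d - 1)) * indicator {b<..<\<mu>} r \<partial>lborel)"
      using b by (auto simp: emeasure_density intro!: nn_integral_cong split: split_indicator)
    also have "\<dots> = ennreal (d * m / \<mu> ^ d * ((\<mu> ^ d - b ^ d) / d))"
      using b_bounds \<open>0 < \<mu>\<close> d by (intro nn_integral_power_Ioo) (auto simp: m_def)
    also have "\<dots> = ennreal ((1 - (b / \<mu>) ^ d) * m)"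
      using \<open>0 < \<mu>\<close> d by (simp add: power_divide divide_simps mult.commute)
    finally show "emeasure ?D {a<..} = ennreal ((1 - (b / \<mu>) ^ d) * m)" .
  qed
  show "emeasure ?N {a<..} < \<infinity>" for a
    using both[OF refl] by simp
  show "emeasure ?N {a<..} = emeasure ?D {a<..}" for a
    using both[OF refl] by simp
qed simp_all

lemma nn_integral_cone_at_radial:
  fixes x e :: "'a::euclidean_space" and h :: "real \<Rightarrow> ennreal"
  assumes h [measurable]: "h \<in> borel_measurable borel" and "0 < \<mu>"
  shows "(\<integral>\<^sup>+y\<in>cone_at x e \<mu> \<nu>. h (norm (y - x)) \<partial>lebesgue)
    = (\<integral>\<^sup>+r\<in>{0<..<\<mu>}. ennreal (DIM('a) * measure lebesgue (cone_at x e \<mu> \<nu>) / \<mu> ^ DIM('a)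
          * r ^ (DIM('a) - 1)) * h r \<partial>lborel)"
proof -
  let ?W = "cone_at x e \<mu> \<nu>"
  have [measurable]: "(\<lambda>y. norm (y - x)) \<in> borel_measurable lebesgue"
    by (rule measurable_completion) measurable
  have [measurable]: "?W \<in> sets lebesgue"
    using lmeasurable_cone_at by (rule fmeasurableD)
  have "(\<integral>\<^sup>+y\<in>?W. h (norm (y - x)) \<partial>lebesgue)
      = (\<integral>\<^sup>+y. h (norm (y - x)) \<partial>density lebesgue (indicator ?W))"
    by (subst nn_integral_density) (auto simp: mult.commute)
  also have "\<dots> = (\<integral>\<^sup>+r. h r \<partial>distr (density lebesgue (indicator ?W)) borel (\<lambda>y. norm (y - x)))"
    by (subst nn_integral_distr) auto
  finally show ?thesis
    unfolding distr_norm_cone_at[OF \<open>0 < \<mu>\<close>]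
    by (subst (asm) nn_integral_density) (auto simp: ac_simps)
qed

definition kappa_integrand :: "real \<Rightarrow> real \<Rightarrow> real \<Rightarrow> nat \<Rightarrow> real \<Rightarrow> real \<Rightarrow> real" where
  "kappa_integrand M \<alpha> q n t r = (t + M * r powr \<alpha>) powr (-q) * r ^ n"

lemma kappa_eq_integral:
  "kappa d volV \<mu> M \<alpha> q t = d * volV / \<mu> ^ d * integral {0..\<mu>} (kappa_integrand M \<alpha> q (d - 1) t)"
  by (simp add: kappa_def kappa_integrand_def[abs_def])

lemma kappa_integrand_nonneg: "0 \<le> r \<Longrightarrow> 0 \<le> kappa_integrand M \<alpha> q n t r"
  by (simp add: kappa_integrand_def)

lemma continuous_on_kappa_integrand:
  assumes "0 \<le> M" "0 < \<alpha>"
  shows "continuous_on ({0<..} \<times> {0..\<mu>}) (\<lambda>(t, r). kappa_integrand M \<alpha> q n t r)"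
proof -
  have "continuous_on ({0<..} \<times> {0..\<mu>}) (\<lambda>z::real \<times> real. snd z powr \<alpha>)"
    using assms by (intro continuous_on_powr' continuous_intros) auto
  then have base: "continuous_on ({0<..} \<times> {0..\<mu>}) (\<lambda>z::real \<times> real. fst z + M * snd z powr \<alpha>)"
    by (intro continuous_on_add continuous_on_mult continuous_on_const continuous_on_fst continuous_on_id)
  have "0 < fst z + M * snd z powr \<alpha>" if "z \<in> {0<..} \<times> {0..\<mu>}" for z
    using that assms by (auto intro!: add_pos_nonneg)
  then have "continuous_on ({0<..} \<times> {0..\<mu>}) (\<lambda>z. (fst z + M * snd z powr \<alpha>) powr (-q))"
    using base continuous_on_const by (rule_tac continuous_on_powr) force+
  then show ?thesis
    unfolding kappa_integrand_def case_prod_beta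
    by (intro continuous_on_mult continuous_on_power continuous_on_snd continuous_on_id)
qed

lemma continuous_on_kappa_integrand_radius:
  assumes "0 \<le> M" "0 < \<alpha>" "0 < t" "0 \<le> a"
  shows "continuous_on {a..b} (kappa_integrand M \<alpha> q n t)"
proof -
  have "continuous_on ((\<lambda>r. (t, r)) ` {a..b}) (\<lambda>(t, r). kappa_integrand M \<alpha> q n t r)"
    using assms by (intro continuous_on_subset[OF continuous_on_kappa_integrand[of M \<alpha> b]]) auto
  then have "continuous_on {a..b} ((\<lambda>(t, r). kappa_integrand M \<alpha> q n t r) \<circ> (\<lambda>r. (t, r)))"
    by (intro continuous_on_compose continuous_intros)
  then show ?thesis
    by (simp add: o_def)
qed

lemma continuous_on_kappa:
  assumes "0 \<le> M" "0 < \<alpha>"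
  shows "continuous_on {0<..} (kappa d volV \<mu> M \<alpha> q)"
proof -
  have "continuous_on {0<..} (\<lambda>t. integral {0..\<mu>} (kappa_integrand M \<alpha> q (d - 1) t))"
    using integral_continuous_on_param[of "{0<..}" 0 \<mu> "kappa_integrand M \<alpha> q (d - 1)"]
      continuous_on_kappa_integrand[OF assms] by (simp add: cbox_interval)
  then show ?thesis
    unfolding kappa_eq_integral[abs_def] by (intro continuous_intros)
qed

lemma kappa_strict_antimono:
  assumes "0 < d" "0 < volV" "0 < \<mu>" "0 \<le> M" "0 < \<alpha>" "0 < q" "0 < s" "s < t"
  shows "kappa d volV \<mu> M \<alpha> q t < kappa d volV \<mu> M \<alpha> q s"
proof -
  have "integral (cbox 0 \<mu>) (kappa_integrand M \<alpha> q (d - 1) t)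
      < integral (cbox 0 \<mu>) (kappa_integrand M \<alpha> q (d - 1) s)"
  proof (rule integral_less)
    show "continuous_on (cbox 0 \<mu>) (kappa_integrand M \<alpha> q (d - 1) t)"
      "continuous_on (cbox 0 \<mu>) (kappa_integrand M \<alpha> q (d - 1) s)"
      using assms by (auto simp: cbox_interval intro!: continuous_on_kappa_integrand_radius)
    show "box 0 \<mu> \<noteq> {}"
      using assms by (simp add: box_real)
    fix r
    assume "r \<in> box 0 \<mu>"
    then have "0 < r"
      by (simp add: box_real)
    moreover have "(t + M * r powr \<alpha>) powr (-q) < (s + M * r powr \<alpha>) powr (-q)"
      using assms by (intro powr_less_mono2_neg) (auto intro!: add_pos_nonneg)
    ultimately show "kappa_integrand M \<alpha> q (d - 1) t r < kappa_integrand M \<alpha> q (d - 1) s r"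
      by (simp add: kappa_integrand_def)
  qed
  then show ?thesis
    unfolding kappa_eq_integral cbox_interval using assms by (intro mult_strict_left_mono) auto
qed

lemma kappa_le_powr:
  assumes "0 < d" "0 \<le> volV" "0 < \<mu>" "0 \<le> M" "0 < \<alpha>" "0 < q" "0 < t"
  shows "kappa d volV \<mu> M \<alpha> q t \<le> d * volV * t powr (-q)"
proof -
  have "kappa_integrand M \<alpha> q (d - 1) t r \<le> t powr (-q) * \<mu> ^ (d - 1)" if "r \<in> {0..\<mu>}" for r
    unfolding kappa_integrand_def
    using that assms by (intro mult_mono powr_mono2' power_mono) auto
  then have "integral {0..\<mu>} (kappa_integrand M \<alpha> q (d - 1) t) \<le> integral {0..\<mu>} (\<lambda>_. t powr (-q) * \<mu> ^ (d - 1))"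
    using assms by (intro integral_le integrable_continuous_interval continuous_on_kappa_integrand_radius) auto
  also have "\<dots> = \<mu> ^ d * t powr (-q)"
    using assms by (simp add: power_eq_if[of \<mu> d])
  finally have "kappa d volV \<mu> M \<alpha> q t \<le> d * volV / \<mu> ^ d * (\<mu> ^ d * t powr (-q))"
    unfolding kappa_eq_integral using assms by (intro mult_left_mono) auto
  then show ?thesis
    using assms by simp
qed

lemma exists_kappa_less:
  assumes "0 < d" "0 \<le> volV" "0 < \<mu>" "0 \<le> M" "0 < \<alpha>" "0 < q" "0 < c"
  shows "\<exists>t>0. kappa d volV \<mu> M \<alpha> q t < c"
proof -
  have "((\<lambda>t. t powr (-q)) \<longlongrightarrow> 0) at_top"
    using \<open>0 < q\<close> by (intro tendsto_neg_powr filterlim_ident) auto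
  then have "((\<lambda>t. d * volV * t powr (-q)) \<longlongrightarrow> d * volV * 0) at_top"
    by (intro tendsto_mult tendsto_const)
  then have "eventually (\<lambda>t. d * volV * t powr (-q) < c) at_top"
    using \<open>0 < c\<close> by (simp add: order_tendsto_iff)
  then have "eventually (\<lambda>t. 0 < t \<and> d * volV * t powr (-q) < c) at_top"
    using eventually_gt_at_top[of 0] by eventually_elim auto
  then obtain t where "0 < t" "d * volV * t powr (-q) < c"
    unfolding eventually_at_top_linorder by blast
  then show ?thesis
    using assms kappa_le_powr[of d volV \<mu> M \<alpha> q t] by (intro exI[of _ t]) auto
qed

lemma has_integral_inverse:
  fixes a b c :: real
  assumes "0 < a" "a \<le> b"
  shows "((\<lambda>r. c / r) has_integral c * (ln b - ln a)) {a..b}"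
proof -
  have "((\<lambda>r. c / r) has_integral (c * ln b - c * ln a)) {a..b}"
  proof (rule fundamental_theorem_of_calculus[OF \<open>a \<le> b\<close>])
    fix r
    assume "r \<in> {a..b}"
    then have "((\<lambda>r. c * ln r) has_real_derivative c / r) (at r within {a..b})"
      using \<open>0 < a\<close> by (auto intro!: derivative_eq_intros simp: field_simps)
    then show "((\<lambda>r. c * ln r) has_vector_derivative c / r) (at r within {a..b})"
      by (simp add: has_real_derivative_iff_has_vector_derivative)
  qed
  then show ?thesis
    by (simp add: right_diff_distrib)
qed

lemma kappa_integrand_ge_inverse:
  assumes "0 < M" "0 < \<alpha>" "0 < q" "real n + 1 \<le> \<alpha> * q" "0 < \<epsilon>" "\<epsilon> \<le> r" "r \<le> \<mu>"
  shows "(2 * M) powr (-q) * \<mu> powr (real n + 1 - \<alpha> * q) / r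
    \<le> kappa_integrand M \<alpha> q n (M * \<epsilon> powr \<alpha>) r"
proof -
  have "0 < r"
    using assms by linarith
  have "M * \<epsilon> powr \<alpha> \<le> M * r powr \<alpha>"
    using assms by (intro mult_left_mono powr_mono2) auto
  then have "(2 * M * r powr \<alpha>) powr (-q) \<le> (M * \<epsilon> powr \<alpha> + M * r powr \<alpha>) powr (-q)"
    using assms by (intro powr_mono2') (auto intro!: add_pos_nonneg)
  also have "(2 * M * r powr \<alpha>) powr (-q) = (2 * M) powr (-q) * r powr (- \<alpha> * q)"
    using assms \<open>0 < r\<close> by (simp add: powr_mult powr_powr)
  finally have A: "(2 * M) powr (-q) * r powr (- \<alpha> * q) \<le> (M * \<epsilon> powr \<alpha> + M * r powr \<alpha>) powr (-q)" .
  have "r powr (- \<alpha> * q) * r ^ n = r powr (real n - \<alpha> * q)"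
    using \<open>0 < r\<close> by (simp add: powr_realpow[symmetric] powr_add[symmetric])
  also have "\<dots> = r powr ((real n + 1 - \<alpha> * q) - 1)"
    by (simp add: algebra_simps)
  also have "\<dots> = r powr (real n + 1 - \<alpha> * q) / r"
    using \<open>0 < r\<close> by (subst powr_diff) simp
  also have "\<dots> \<ge> \<mu> powr (real n + 1 - \<alpha> * q) / r"
    using assms \<open>0 < r\<close> by (intro divide_right_mono powr_mono2') auto
  finally have B: "\<mu> powr (real n + 1 - \<alpha> * q) / r \<le> r powr (- \<alpha> * q) * r ^ n" .
  have "(2 * M) powr (-q) * \<mu> powr (real n + 1 - \<alpha> * q) / r
      \<le> (2 * M) powr (-q) * (r powr (- \<alpha> * q) * r ^ n)"
    using mult_left_mono[OF B, of "(2 * M) powr (-q)"] by simp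
  also have "\<dots> = ((2 * M) powr (-q) * r powr (- \<alpha> * q)) * r ^ n"
    by (simp only: mult.assoc)
  also have "\<dots> \<le> kappa_integrand M \<alpha> q n (M * \<epsilon> powr \<alpha>) r"
    unfolding kappa_integrand_def using \<open>0 < r\<close> A by (intro mult_right_mono) auto
  finally show ?thesis .
qed

text \<open>For \<open>t = M \<epsilon>\<^sup>\<alpha>\<close> the integrand dominates \<open>c\<^sub>0 / r\<close> on \<open>[\<epsilon>, \<mu>]\<close>, and
  \<open>\<integral>\<^sub>\<epsilon>\<^sup>\<mu> c\<^sub>0 / r = c\<^sub>0 ln (\<mu> / \<epsilon>)\<close> is unbounded as \<open>\<epsilon> \<rightarrow> 0\<close>.\<close>

lemma exists_integral_kappa_integrand_greater:
  assumes "0 < M" "0 < \<alpha>" "0 < \<mu>" "real n + 1 \<le> \<alpha> * q"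
  shows "\<exists>t>0. c < integral {0..\<mu>} (kappa_integrand M \<alpha> q n t)"
proof -
  have "0 < \<alpha> * q"
    using assms(4) of_nat_0_le_iff[of n] by linarith
  then have "0 < q"
    using \<open>0 < \<alpha>\<close> zero_less_mult_pos by blast
  define c0 where "c0 = (2 * M) powr (-q) * \<mu> powr (real n + 1 - \<alpha> * q)"
  have "0 < c0"
    using assms by (simp add: c0_def)
  define L where "L = \<bar>c\<bar> / c0 + 1"
  define \<epsilon> where "\<epsilon> = \<mu> * exp (-L)"
  have "0 < L"
    using \<open>0 < c0\<close> by (simp add: L_def add_nonneg_pos)
  then have "0 < \<epsilon>" "\<epsilon> < \<mu>"
    using assms by (auto simp: \<epsilon>_def)
  define t where "t = M * \<epsilon> powr \<alpha>"
  have "0 < t"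
    using assms \<open>0 < \<epsilon>\<close> by (simp add: t_def)
  have "ln \<mu> - ln \<epsilon> = L"
    using assms by (simp add: \<epsilon>_def ln_mult)
  then have ftc: "((\<lambda>r. c0 / r) has_integral c0 * L) {\<epsilon>..\<mu>}"
    using has_integral_inverse[of \<epsilon> \<mu> c0] \<open>0 < \<epsilon>\<close> \<open>\<epsilon> < \<mu>\<close> by simp
  have "c < c0 * L"
    using \<open>0 < c0\<close> abs_ge_self[of c] by (simp add: L_def distrib_left)
  also have "c0 * L \<le> integral {\<epsilon>..\<mu>} (kappa_integrand M \<alpha> q n t)"
    using ftc \<open>0 < t\<close> \<open>0 < \<epsilon>\<close> \<open>0 < q\<close> assms
      kappa_integrand_ge_inverse[of M \<alpha> q n \<epsilon> _ \<mu>]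
    by (intro has_integral_le[OF _ integrable_integral]) (auto simp: c0_def t_def
        intro!: integrable_continuous_interval continuous_on_kappa_integrand_radius)
  also have "\<dots> \<le> integral {0..\<mu>} (kappa_integrand M \<alpha> q n t)"
    using \<open>0 < t\<close> \<open>0 < \<epsilon>\<close> assms
    by (intro integral_subset_le integrable_continuous_interval continuous_on_kappa_integrand_radius)
      (auto intro: kappa_integrand_nonneg)
  finally show ?thesis
    using \<open>0 < t\<close> by blast
qed

lemma exists_kappa_greater:
  assumes "0 < d" "0 < volV" "0 < \<mu>" "0 < M" "0 < \<alpha>" "real d \<le> \<alpha> * q"
  shows "\<exists>t>0. c < kappa d volV \<mu> M \<alpha> q t"
proof -
  obtain t where "0 < t" "c / (d * volV / \<mu> ^ d) < integral {0..\<mu>} (kappa_integrand M \<alpha> q (d - 1) t)"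
    using assms exists_integral_kappa_integrand_greater[of M \<alpha> \<mu> "d - 1" q] by (auto simp: of_nat_diff)
  then show ?thesis
    using assms by (intro exI[of _ t]) (simp add: kappa_eq_integral pos_divide_less_eq pos_less_divide_eq mult.commute)
qed

lemma kappa_eq_unique:
  assumes "0 < d" "0 < volV" "0 < \<mu>" "0 < M" "0 < \<alpha>" "real d \<le> \<alpha> * q" "0 < C"
  shows "\<exists>!t. 0 < t \<and> kappa d volV \<mu> M \<alpha> q t = C"
proof -
  let ?\<kappa> = "kappa d volV \<mu> M \<alpha> q"
  have "0 < \<alpha> * q"
    using assms(1,6) by linarith
  then have "0 < q"
    using \<open>0 < \<alpha>\<close> zero_less_mult_pos by blast
  then have mono: "?\<kappa> t < ?\<kappa> s" if "0 < s" "s < t" for s t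
    using assms that by (intro kappa_strict_antimono) auto
  obtain s where s: "0 < s" "C < ?\<kappa> s"
    using exists_kappa_greater assms by blast
  obtain t where t: "0 < t" "?\<kappa> t < C"
    using exists_kappa_less[of d volV \<mu> M \<alpha> q C] assms \<open>0 < q\<close> by auto
  have "s < t"
  proof (rule ccontr)
    assume "\<not> s < t"
    then have "?\<kappa> s \<le> ?\<kappa> t"
      using mono[of t s] \<open>0 < t\<close> by (cases "s = t") auto
    then show False
      using s t by simp
  qed
  moreover have "continuous_on {s..t} ?\<kappa>"
    using assms s by (intro continuous_on_subset[OF continuous_on_kappa[of M \<alpha> d volV \<mu> q]]) auto
  ultimately obtain u where "s \<le> u" "u \<le> t" "?\<kappa> u = C"
    using IVT2'[of ?\<kappa> t C s] s t by auto
  show ?thesis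
  proof (rule ex1I[of _ u])
    show "0 < u \<and> ?\<kappa> u = C"
      using \<open>0 < s\<close> \<open>s \<le> u\<close> \<open>?\<kappa> u = C\<close> by auto
    fix v
    assume "0 < v \<and> ?\<kappa> v = C"
    then show "v = u"
      using mono[of u v] mono[of v u] \<open>0 < s\<close> \<open>s \<le> u\<close> \<open>?\<kappa> u = C\<close>
      by (cases v u rule: linorder_cases) auto
  qed
qed

lemma nn_integral_cone_at_eq_kappa:
  fixes x e :: "'a::euclidean_space"
  assumes "0 < \<mu>" "0 \<le> M" "0 < \<alpha>" "0 < t"
  shows "(\<integral>\<^sup>+y\<in>cone_at x e \<mu> \<nu>. ennreal ((t + M * norm (y - x) powr \<alpha>) powr (-q)) \<partial>lebesgue)
    = ennreal (kappa DIM('a) (measure lebesgue (cone_at x e \<mu> \<nu>)) \<mu> M \<alpha> q t)"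
proof -
  define c where "c = DIM('a) * measure lebesgue (cone_at x e \<mu> \<nu>) / \<mu> ^ DIM('a)"
  define f where "f = kappa_integrand M \<alpha> q (DIM('a) - 1) t"
  have "0 \<le> c"
    using assms by (simp add: c_def)
  have "(f has_integral integral {0..\<mu>} f) {0<..<\<mu>}"
    unfolding f_def using assms has_integral_open_interval[of _ _ 0 \<mu>]
    by (auto simp: box_real cbox_interval intro!: integrable_integral integrable_continuous_interval
        continuous_on_kappa_integrand_radius)
  then have int: "(\<integral>\<^sup>+r. ennreal (c * f r) * indicator {0<..<\<mu>} r \<partial>lborel) = ennreal (c * integral {0..\<mu>} f)"
    using \<open>0 \<le> c\<close> by (intro nn_integral_has_integral_lebesgue' has_integral_mult_right)
      (auto simp: f_def kappa_integrand_nonneg)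
  have pointwise: "ennreal (c * r ^ (DIM('a) - 1)) * ennreal ((t + M * r powr \<alpha>) powr (-q)) = ennreal (c * f r)"
    if "0 < r" for r
    using \<open>0 \<le> c\<close> that by (simp add: f_def kappa_integrand_def ennreal_mult[symmetric] mult_ac)
  have "(\<integral>\<^sup>+y\<in>cone_at x e \<mu> \<nu>. ennreal ((t + M * norm (y - x) powr \<alpha>) powr (-q)) \<partial>lebesgue)
      = (\<integral>\<^sup>+r\<in>{0<..<\<mu>}. ennreal (c * r ^ (DIM('a) - 1)) * ennreal ((t + M * r powr \<alpha>) powr (-q)) \<partial>lborel)"
    unfolding c_def
    by (rule nn_integral_cone_at_radial[where h="\<lambda>r. ennreal ((t + M * r powr \<alpha>) powr (-q))",
          OF _ \<open>0 < \<mu>\<close>]) measurable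
  also have "\<dots> = (\<integral>\<^sup>+r. ennreal (c * f r) * indicator {0<..<\<mu>} r \<partial>lborel)"
    using pointwise by (intro nn_integral_cong) (auto split: split_indicator)
  also have "\<dots> = ennreal (c * integral {0..\<mu>} f)"
    by (rule int)
  finally show ?thesis
    by (simp add: kappa_eq_integral c_def f_def)
qed

lemma ray_leaves_ball:
  fixes e u :: "'a::real_inner"
  assumes "norm e = 1" "norm u = 1" "0 \<le> u \<bullet> e" "0 < s" "s < \<mu>"
  shows "\<exists>t. 0 < t \<and> t < \<mu> \<and> \<mu> < norm (s *\<^sub>R e + t *\<^sub>R u)"
proof -
  define t where "t = \<mu> - s\<^sup>2 / (4 * \<mu>)"
  have "s\<^sup>2 < 4 * \<mu>\<^sup>2"
    using assms power_strict_mono[of s \<mu> 2] zero_le_power2[of \<mu>] by linarith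
  then have "s\<^sup>2 / (4 * \<mu>) < 4 * \<mu>\<^sup>2 / (4 * \<mu>)"
    using assms by (intro divide_strict_right_mono) auto
  then have "0 < t" "t < \<mu>"
    using assms by (auto simp: t_def power2_eq_square)
  have "t\<^sup>2 = \<mu>\<^sup>2 - s\<^sup>2 / 2 + (s\<^sup>2 / (4 * \<mu>))\<^sup>2"
    using assms by (simp add: t_def power2_eq_square field_simps)
  then have "\<mu>\<^sup>2 < s\<^sup>2 + t\<^sup>2"
    using assms zero_le_power2[of "s\<^sup>2 / (4 * \<mu>)"] zero_less_power[of s 2] by linarith
  moreover have "e \<bullet> e = 1" "u \<bullet> u = 1"
    using assms by (simp_all add: norm_eq_1)
  then have "(norm (s *\<^sub>R e + t *\<^sub>R u))\<^sup>2 = s\<^sup>2 + 2 * s * t * (u \<bullet> e) + t\<^sup>2"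
    unfolding power2_norm_eq_inner
    by (simp add: inner_add_left inner_add_right inner_commute power2_eq_square algebra_simps)
  then have "s\<^sup>2 + t\<^sup>2 \<le> (norm (s *\<^sub>R e + t *\<^sub>R u))\<^sup>2"
    using assms \<open>0 < t\<close> by simp
  ultimately show ?thesis
    using assms \<open>0 < t\<close> \<open>t < \<mu>\<close> by (intro exI[of _ t]) (auto intro: power2_less_imp_less)
qed

lemma cone_at_point_outside_ball:
  fixes e u v :: "'a::real_inner"
  assumes "norm e = 1" "norm u = 1" "\<nu> < u \<bullet> v" "0 \<le> u \<bullet> e" "0 < s" "s < \<mu>"
  shows "\<exists>w\<in>cone_at 0 v \<mu> \<nu>. \<mu> < norm (s *\<^sub>R e + w)"
proof -
  obtain t where "0 < t" "t < \<mu>" "\<mu> < norm (s *\<^sub>R e + t *\<^sub>R u)"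
    using ray_leaves_ball[of e u s \<mu>] assms by blast
  then show ?thesis
    using assms by (intro bexI[of _ "t *\<^sub>R u"]) (auto simp: cone_at_def)
qed

lemma exists_unit_acute_to_both:
  fixes e v :: "'a::real_inner"
  assumes e: "norm e = 1" and v: "norm v = 1" and "v \<noteq> -e"
  shows "\<exists>u. norm u = 1 \<and> 0 < u \<bullet> v \<and> 0 < u \<bullet> e"
proof -
  have ee: "e \<bullet> e = 1" and vv: "v \<bullet> v = 1"
    using e v by (simp_all add: norm_eq_1)
  have "v \<bullet> e \<noteq> -1"
  proof
    assume "v \<bullet> e = -1"
    then have "(norm (v + e))\<^sup>2 = 0"
      using ee vv by (simp add: power2_norm_eq_inner inner_add_left inner_add_right inner_commute)
    then show False
      using \<open>v \<noteq> -e\<close> by (simp add: add_eq_0_iff2)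
  qed
  moreover have "-1 \<le> v \<bullet> e"
    using norm_cauchy_schwarz[of "-v" e] e v by simp
  ultimately have "0 < 1 + v \<bullet> e" "v + e \<noteq> 0"
    using \<open>v \<noteq> -e\<close> by (auto simp: add_eq_0_iff2)
  moreover have "((v + e) /\<^sub>R norm (v + e)) \<bullet> v = (1 + v \<bullet> e) / norm (v + e)"
    "((v + e) /\<^sub>R norm (v + e)) \<bullet> e = (1 + v \<bullet> e) / norm (v + e)"
    using ee vv by (simp_all add: inner_add_left inner_add_right inner_commute divide_inverse mult.commute)
  ultimately show ?thesis
    by (intro exI[of _ "(v + e) /\<^sub>R norm (v + e)"]) simp
qed

lemma cone_at_point_outside_angle:
  fixes e v :: "'a::real_inner"
  assumes e: "norm e = 1" and v: "norm v = 1" and "v \<bullet> e < 0" "0 < \<nu>" "\<nu> < 1" "0 < s" "0 < \<mu>"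
    and s_small: "s * (1 + \<nu>) \<le> \<nu> * \<mu> / 2"
  shows "\<exists>w\<in>cone_at 0 v \<mu> \<nu>. (s *\<^sub>R e + w) \<bullet> e < \<nu> * norm (s *\<^sub>R e + w)"
proof -
  define w where "w = (\<mu> / 2) *\<^sub>R v"
  have "\<mu> / 2 - s \<le> norm (s *\<^sub>R e + w)"
    using norm_diff_ineq[of w "s *\<^sub>R e"] assms by (simp add: w_def add.commute)
  have "s \<le> \<nu> * (\<mu> / 2 - s)"
    using s_small by (simp add: algebra_simps)
  also have "\<dots> \<le> \<nu> * norm (s *\<^sub>R e + w)"
    using \<open>\<mu> / 2 - s \<le> norm (s *\<^sub>R e + w)\<close> \<open>0 < \<nu>\<close> by (intro mult_left_mono) auto
  moreover have "(s *\<^sub>R e + w) \<bullet> e < s"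
    using assms norm_eq_1[of e]
    by (simp add: w_def inner_add_left inner_add_right inner_commute mult_pos_neg)
  moreover have "w \<in> cone_at 0 v \<mu> \<nu>"
    using assms norm_eq_1[of v] by (simp add: w_def cone_at_def)
  ultimately show ?thesis
    by (intro bexI[of _ w]) auto
qed

lemma cone_at_point_behind:
  fixes e :: "'a::real_inner"
  assumes e: "norm e = 1" and "-1 < \<nu>" "0 < s" "s < \<mu>" "\<nu> < 1"
  shows "\<exists>w\<in>cone_at 0 (-e) \<mu> \<nu>. (s *\<^sub>R e + w) \<bullet> e < \<nu> * norm (s *\<^sub>R e + w)"
proof -
  define t where "t = (s + \<mu>) / 2"
  have "s < t" "t < \<mu>"
    using assms by (auto simp: t_def)
  have "s *\<^sub>R e + t *\<^sub>R (-e) = (s - t) *\<^sub>R e"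
    by (simp add: algebra_simps)
  then have "norm (s *\<^sub>R e + t *\<^sub>R (-e)) = t - s" "(s *\<^sub>R e + t *\<^sub>R (-e)) \<bullet> e = s - t"
    using e norm_eq_1[of e] \<open>s < t\<close> by simp_all
  moreover have "s - t < \<nu> * (t - s)"
    using \<open>-1 < \<nu>\<close> \<open>s < t\<close> mult_strict_right_mono[of "-1" \<nu> "t - s"] by simp
  moreover have "t *\<^sub>R (-e) \<in> cone_at 0 (-e) \<mu> \<nu>"
    using e norm_eq_1[of e] \<open>s < t\<close> \<open>t < \<mu>\<close> assms by (simp add: cone_at_def)
  ultimately show ?thesis
    by (intro bexI[of _ "t *\<^sub>R (-e)"]) auto
qed

lemma exists_unit_orthogonal:
  fixes e :: "'a::euclidean_space"
  assumes "2 \<le> DIM('a)"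
  shows "\<exists>u. norm u = 1 \<and> u \<bullet> e = 0"
proof -
  obtain u where "u \<noteq> 0" "orthogonal e u"
    using assms by (rule orthogonal_to_vector_exists)
  then show ?thesis
    by (intro exI[of _ "u /\<^sub>R norm u"]) (auto simp: orthogonal_def inner_commute)
qed

text \<open>In dimension one the hypothesis
  \<open>v = e\<close> is needed: for \<open>\<nu> = -1\<close> and \<open>v = -e\<close> the second cone would lie in the first.\<close>

lemma cone_point_outside_closed_cone:
  fixes e v :: "'a::euclidean_space"
  assumes e: "norm e = 1" and v: "norm v = 1" and s: "0 < s" "s < \<mu>" and "\<nu> < 1"
    and s_small: "0 < \<nu> \<Longrightarrow> s * (1 + \<nu>) \<le> \<nu> * \<mu> / 2"
    and dim1: "DIM('a) = 1 \<Longrightarrow> v = e"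
  shows "\<exists>w\<in>cone_at 0 v \<mu> \<nu>. \<mu> < norm (s *\<^sub>R e + w) \<or> (s *\<^sub>R e + w) \<bullet> e < \<nu> * norm (s *\<^sub>R e + w)"
proof -
  consider "0 \<le> v \<bullet> e" | "v \<bullet> e < 0" "0 < \<nu>" | "\<nu> \<le> 0" "v \<noteq> -e" | "v = -e" "-1 < \<nu>"
    | "v = -e" "\<nu> \<le> -1"
    by linarith
  then show ?thesis
  proof cases
    case 1
    then show ?thesis
      using cone_at_point_outside_ball[OF e v _ _ s, of \<nu> v] norm_eq_1[of v] v \<open>\<nu> < 1\<close> by auto
  next
    case 2
    have "0 < \<mu>"
      using s by linarith
    then show ?thesis
      using cone_at_point_outside_angle[OF e v 2 \<open>\<nu> < 1\<close> s(1) _ s_small[OF 2(2)]] by blast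
  next
    case 3
    then obtain u where "norm u = 1" "0 < u \<bullet> v" "0 < u \<bullet> e"
      using exists_unit_acute_to_both[OF e v] by blast
    then show ?thesis
      using cone_at_point_outside_ball[OF e _ _ _ s, of u \<nu> v] 3 by fastforce
  next
    case 4
    then show ?thesis
      using cone_at_point_behind[OF e 4(2) s \<open>\<nu> < 1\<close>] unfolding 4(1) by blast
  next
    case 5
    have "DIM('a) \<noteq> 1"
    proof
      assume "DIM('a) = 1"
      then have "(2::real) *\<^sub>R e = 0"
        using dim1 5 by (metis add.left_inverse scaleR_2)
      then show False
        using e by simp
    qed
    then have "2 \<le> DIM('a)"
      using DIM_positive[where 'a='a] by linarith
    then obtain u where "norm u = 1" "u \<bullet> e = 0"
      using exists_unit_orthogonal by blast
    then show ?thesis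
      using cone_at_point_outside_ball[OF e _ _ _ s, of u \<nu> v] 5 by auto
  qed
qed

lemma interior_cone_property_escapes_closed_cone:
  fixes \<Omega> :: "(real ^ 'n) set"
  assumes icp: "interior_cone_property \<Omega> i \<mu> \<nu>" and "0 < \<mu>" "\<nu> < 1"
    and Q: "rotation_matrix Q" and cone_x: "cone_at x (Q *v axis i 1) \<mu> \<nu> \<subseteq> \<Omega>"
  shows "\<exists>z\<in>\<Omega>. \<not> (norm (z - x) \<le> \<mu> \<and> \<nu> * norm (z - x) \<le> (z - x) \<bullet> (Q *v axis i 1))"
proof -
  define e where "e = Q *v axis i 1"
  have e: "norm e = 1"
    using Q by (simp add: e_def rotation_matrix_def norm_orthogonal_matrix_axis)
  obtain s where s: "0 < s" "s < \<mu>" and s_small: "0 < \<nu> \<Longrightarrow> s * (1 + \<nu>) \<le> \<nu> * \<mu> / 2"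
  proof (cases "0 < \<nu>")
    case True
    have "\<nu> * \<mu> * (1 + \<nu>) \<le> \<nu> * \<mu> * 2"
      using True \<open>0 < \<mu>\<close> \<open>\<nu> < 1\<close> by (intro mult_left_mono) auto
    then show ?thesis
      using that[of "\<nu> * \<mu> / 4"] True \<open>0 < \<mu>\<close> \<open>\<nu> < 1\<close> by simp
  next
    case False
    then show ?thesis
      using that[of "\<mu> / 2"] \<open>0 < \<mu>\<close> by simp
  qed
  have "x + s *\<^sub>R e \<in> cone_at x e \<mu> \<nu>"
    using s e \<open>\<nu> < 1\<close> norm_eq_1[of e] by (simp add: cone_at_def)
  then have "x + s *\<^sub>R e \<in> \<Omega>"
    using cone_x by (auto simp: e_def)
  then obtain Q' where "rotation_matrix Q'" "(\<lambda>v. x + s *\<^sub>R e + Q' *v v) ` cone_V i \<mu> \<nu> \<subseteq> \<Omega>"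
    using icp unfolding interior_cone_property_def by blast
  then have Q': "orthogonal_matrix Q'" "det Q' = 1" "cone_at (x + s *\<^sub>R e) (Q' *v axis i 1) \<mu> \<nu> \<subseteq> \<Omega>"
    by (simp_all add: rotation_matrix_def rotated_cone_V_eq_cone_at)
  have "CARD('n) = 1 \<Longrightarrow> Q' *v axis i 1 = e"
    using Q Q' by (simp add: e_def rotation_matrix_def det_one_dim1_fixes_axis)
  then obtain w where w: "w \<in> cone_at 0 (Q' *v axis i 1) \<mu> \<nu>"
    "\<mu> < norm (s *\<^sub>R e + w) \<or> (s *\<^sub>R e + w) \<bullet> e < \<nu> * norm (s *\<^sub>R e + w)"
    using cone_point_outside_closed_cone[OF e norm_orthogonal_matrix_axis[OF Q'(1)] s \<open>\<nu> < 1\<close> s_small]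
    by auto
  then show ?thesis
    using Q'(3) unfolding e_def[symmetric]
    by (intro bexI[of _ "x + s *\<^sub>R e + w"]) (auto simp: cone_at_def add.assoc)
qed

lemma exists_ball_disjoint_cone:
  fixes \<Omega> :: "(real ^ 'n) set"
  assumes "open \<Omega>" and icp: "interior_cone_property \<Omega> i \<mu> \<nu>" and "0 < \<mu>" "\<nu> < 1"
    and Q: "rotation_matrix Q" and cone_x: "cone_at x (Q *v axis i 1) \<mu> \<nu> \<subseteq> \<Omega>"
  shows "\<exists>z \<rho>. 0 < \<rho> \<and> \<rho> \<le> \<mu> \<and> ball z \<rho> \<subseteq> \<Omega> \<and> ball z \<rho> \<inter> cone_at x (Q *v axis i 1) \<mu> \<nu> = {}"
proof -
  define K where "K = {y. norm (y - x) \<le> \<mu> \<and> \<nu> * norm (y - x) \<le> (y - x) \<bullet> (Q *v axis i 1)}"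
  obtain z where "z \<in> \<Omega> - K"
    using interior_cone_property_escapes_closed_cone[OF icp \<open>0 < \<mu>\<close> \<open>\<nu> < 1\<close> Q cone_x]
    by (auto simp: K_def)
  moreover have "open (\<Omega> - K)"
    unfolding K_def using \<open>open \<Omega>\<close>
    by (intro open_Diff closed_Collect_conj closed_Collect_le continuous_intros)
  ultimately obtain \<epsilon> where "0 < \<epsilon>" "ball z \<epsilon> \<subseteq> \<Omega> - K"
    by (meson openE)
  moreover have "cone_at x (Q *v axis i 1) \<mu> \<nu> \<subseteq> K"
    by (auto simp: cone_at_def K_def)
  ultimately show ?thesis
    using \<open>0 < \<mu>\<close> by (intro exI[of _ z] exI[of _ "min \<epsilon> \<mu>"]) auto
qed

lemma set_nn_integral_less_of_disjoint:
  fixes f g :: "'a \<Rightarrow> ennreal"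
  assumes [measurable]: "f \<in> borel_measurable M" "A \<in> sets M" "B \<in> sets M"
    and "A \<inter> B = {}" "A \<subseteq> \<Omega>" "B \<subseteq> \<Omega>"
    and "\<And>y. y \<in> A \<Longrightarrow> f y \<le> g y" "\<And>y. y \<in> B \<Longrightarrow> c \<le> g y"
    and "0 < c" "0 < emeasure M B" "(\<integral>\<^sup>+y\<in>A. f y \<partial>M) \<noteq> \<infinity>"
  shows "(\<integral>\<^sup>+y\<in>A. f y \<partial>M) < (\<integral>\<^sup>+y\<in>\<Omega>. g y \<partial>M)"
proof -
  have "(\<integral>\<^sup>+y\<in>A. f y \<partial>M) < (\<integral>\<^sup>+y\<in>A. f y \<partial>M) + c * emeasure M B"
    using assms(9-11) ennreal_add_left_cancel_less[of "\<integral>\<^sup>+y\<in>A. f y \<partial>M" 0]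
    by (simp add: ennreal_zero_less_mult_iff)
  also have "\<dots> = (\<integral>\<^sup>+y. f y * indicator A y + c * indicator B y \<partial>M)"
    by (subst nn_integral_add; (simp add: nn_integral_cmult_indicator | measurable))
  also have "\<dots> \<le> (\<integral>\<^sup>+y\<in>\<Omega>. g y \<partial>M)"
    using assms(4-8) by (intro nn_integral_mono) (auto split: split_indicator)
  finally show ?thesis .
qed

lemma max_powr_le_of_holder:
  fixes J :: "'a::metric_space \<Rightarrow> real"
  assumes holder: "\<forall>x1\<in>\<Omega>. \<forall>x2\<in>\<Omega>. dist x1 x2 < \<mu> \<longrightarrow> \<bar>J x1 - J x2\<bar> \<le> M * dist x1 x2 powr \<alpha>"
    and "y \<in> \<Omega>" "y0 \<in> \<Omega>" "dist y y0 < \<mu>" "dist y y0 \<le> r" "J y0 \<le> a"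
    and "0 \<le> M" "0 < \<alpha>" "0 < \<delta>" "0 \<le> q"
  shows "max \<delta> (a + M * r powr \<alpha>) powr (-q) \<le> max \<delta> (J y) powr (-q)"
proof -
  have "\<bar>J y - J y0\<bar> \<le> M * dist y y0 powr \<alpha>"
    using holder assms by auto
  also have "\<dots> \<le> M * r powr \<alpha>"
    using assms by (intro mult_left_mono powr_mono2) auto
  finally have "J y \<le> a + M * r powr \<alpha>"
    using assms by linarith
  then show ?thesis
    using assms by (intro powr_mono2') auto
qed

lemma kappa_less_nn_integral:
  fixes \<Omega> :: "(real ^ 'n) set" and J :: "real ^ 'n \<Rightarrow> real"
  assumes "open \<Omega>" and icp: "interior_cone_property \<Omega> i \<mu> \<nu>" and "0 < \<mu>" "\<nu> < 1"
    and "0 < \<alpha>" "0 < M" "0 \<le> q" "0 < \<delta>"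
    and holder: "\<forall>x1\<in>\<Omega>. \<forall>x2\<in>\<Omega>. dist x1 x2 < \<mu> \<longrightarrow> \<bar>J x1 - J x2\<bar> \<le> M * dist x1 x2 powr \<alpha>"
    and x: "x \<in> \<Omega>" "J x \<le> \<delta>"
  shows "ennreal (kappa CARD('n) (measure lebesgue (cone_V i \<mu> \<nu>)) \<mu> M \<alpha> q \<delta>)
    < (\<integral>\<^sup>+y\<in>\<Omega>. ennreal (max \<delta> (J y) powr (-q)) \<partial>lebesgue)"
proof -
  obtain Q where Q: "rotation_matrix Q" "(\<lambda>v. x + Q *v v) ` cone_V i \<mu> \<nu> \<subseteq> \<Omega>"
    using icp x unfolding interior_cone_property_def by blast
  define W where "W = cone_at x (Q *v axis i 1) \<mu> \<nu>"
  have "W \<subseteq> \<Omega>"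
    using Q by (simp add: W_def rotation_matrix_def rotated_cone_V_eq_cone_at)
  obtain z \<rho> where B: "0 < \<rho>" "\<rho> \<le> \<mu>" "ball z \<rho> \<subseteq> \<Omega>" "ball z \<rho> \<inter> W = {}"
    using exists_ball_disjoint_cone[OF \<open>open \<Omega>\<close> icp \<open>0 < \<mu>\<close> \<open>\<nu> < 1\<close> Q(1)] \<open>W \<subseteq> \<Omega>\<close>
    unfolding W_def by blast
  define h where "h y = ennreal ((\<delta> + M * norm (y - x) powr \<alpha>) powr (-q))" for y
  have "h y \<le> ennreal (max \<delta> (J y) powr (-q))" if "y \<in> W" for y
  proof -
    have "y \<in> \<Omega>" "dist y x < \<mu>"
      using that \<open>W \<subseteq> \<Omega>\<close> by (auto simp: W_def cone_at_def dist_norm)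
    then have "max \<delta> (\<delta> + M * norm (y - x) powr \<alpha>) powr (-q) \<le> max \<delta> (J y) powr (-q)"
      using assms by (intro max_powr_le_of_holder[OF holder]) (auto simp: dist_norm)
    then show ?thesis
      using \<open>0 < M\<close> by (simp add: h_def max_absorb2 ennreal_leI)
  qed
  moreover have "ennreal (max \<delta> (J z + M * \<mu> powr \<alpha>) powr (-q)) \<le> ennreal (max \<delta> (J y) powr (-q))"
    if "y \<in> ball z \<rho>" for y
  proof -
    have "y \<in> \<Omega>" "z \<in> \<Omega>" "dist y z < \<mu>"
      using that B by (auto simp: dist_commute)
    then show ?thesis
      using max_powr_le_of_holder[OF holder \<open>y \<in> \<Omega>\<close> \<open>z \<in> \<Omega>\<close> \<open>dist y z < \<mu>\<close> _ order_refl] assms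
      by (auto intro: ennreal_leI)
  qed
  moreover have "0 < emeasure lebesgue (ball z \<rho>)"
    using content_ball_pos[OF \<open>0 < \<rho>\<close>, of z] by (simp add: emeasure_eq_measure2)
  moreover have W_eq: "(\<integral>\<^sup>+y\<in>W. h y \<partial>lebesgue)
      = ennreal (kappa CARD('n) (measure lebesgue (cone_V i \<mu> \<nu>)) \<mu> M \<alpha> q \<delta>)"
    unfolding W_def h_def using \<open>0 < \<mu>\<close> \<open>0 < M\<close> \<open>0 < \<alpha>\<close> \<open>0 < \<delta>\<close> Q(1)
    by (subst nn_integral_cone_at_eq_kappa) (auto simp: rotation_matrix_def measure_rotated_cone_at)
  moreover have "h \<in> borel_measurable lebesgue" "W \<in> sets lebesgue"
    unfolding h_def W_def by (rule measurable_completion, measurable) (rule fmeasurableD[OF lmeasurable_cone_at])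
  ultimately have "(\<integral>\<^sup>+y\<in>W. h y \<partial>lebesgue) < (\<integral>\<^sup>+y\<in>\<Omega>. ennreal (max \<delta> (J y) powr (-q)) \<partial>lebesgue)"
    using B(3,4) \<open>W \<subseteq> \<Omega>\<close> \<open>0 < \<delta>\<close>
    by (intro set_nn_integral_less_of_disjoint[where B="ball z \<rho>"
          and c="ennreal (max \<delta> (J z + M * \<mu> powr \<alpha>) powr (-q))"]) (auto simp: Int_commute)
  then show ?thesis
    unfolding W_eq .
qed

theorem lemma4p11:
  fixes \<Omega> :: "(real ^ 'n) set" and i0 :: 'n
    and \<mu> \<nu> \<alpha> q M C :: real and J :: "real ^ 'n \<Rightarrow> real"
  defines "d \<equiv> CARD('n)"
  defines "volV \<equiv> measure lebesgue (cone_V i0 \<mu> \<nu>)"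
  defines "\<delta> \<equiv> THE t. t > 0 \<and> kappa d volV \<mu> M \<alpha> q t = C"
  assumes dom: "open \<Omega>" "connected \<Omega>" "bounded \<Omega>"
    and cone: "\<mu> > 0" "\<nu> < 1" "interior_cone_property \<Omega> i0 \<mu> \<nu>"
    and alpha: "0 < \<alpha>" "\<alpha> < 1"
    and holder: "holder_continuous_on \<alpha> \<Omega> J"
    and q: "q \<ge> real d / \<alpha>"
    and MC: "M > 0" "C > 0"
    and int_bound: "(\<integral>\<^sup>+ x\<in>\<Omega>. ennreal ((max \<delta> (J x)) powr (-q)) \<partial>lebesgue) \<le> ennreal C"
    and seminorm: "\<forall>x1\<in>\<Omega>. \<forall>x2\<in>\<Omega>. dist x1 x2 < \<mu> \<longrightarrow>
                     \<bar>J x1 - J x2\<bar> \<le> M * dist x1 x2 powr \<alpha>"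
  shows "\<delta> > 0 \<and> (\<forall>x\<in>\<Omega>. J x > \<delta>)"
proof -
  have "0 < d"
    by (simp add: d_def)
  have "0 < volV"
    using measure_cone_at_pos[of "axis i0 (1::real)" \<mu> \<nu> 0] cone(1,2) by (simp add: volV_def cone_V_eq_cone_at)
  have "real d \<le> \<alpha> * q"
    using q alpha(1) by (simp add: divide_le_eq mult.commute)
  then have "0 < \<alpha> * q"
    using \<open>0 < d\<close> by linarith
  then have "0 \<le> q"
    using alpha(1) by (simp add: zero_less_mult_iff)
  have "\<exists>!t. 0 < t \<and> kappa d volV \<mu> M \<alpha> q t = C"
    using \<open>0 < d\<close> \<open>0 < volV\<close> cone(1) MC(1) alpha(1) \<open>real d \<le> \<alpha> * q\<close> MC(2)
    by (rule kappa_eq_unique)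
  then have \<delta>: "0 < \<delta> \<and> kappa d volV \<mu> M \<alpha> q \<delta> = C"
    unfolding \<delta>_def by (rule theI')
  have "\<delta> < J x" if "x \<in> \<Omega>" for x
  proof (rule ccontr)
    assume "\<not> \<delta> < J x"
    then have "ennreal (kappa d volV \<mu> M \<alpha> q \<delta>) < (\<integral>\<^sup>+y\<in>\<Omega>. ennreal (max \<delta> (J y) powr (-q)) \<partial>lebesgue)"
      unfolding d_def volV_def using \<delta> dom(1) cone alpha(1) MC(1) \<open>0 \<le> q\<close> seminorm that
      by (intro kappa_less_nn_integral) auto
    then show False
      using int_bound \<delta> by simp
  qed
  then show ?thesis
    using \<delta> by blast
qed

end
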